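(* Let $\Pi$ be an infinite atomless L\'evy measure on $(0,\infty)$ with tail $\overline{\Pi}(x)=\Pi((x,\infty))$ and inverse $\overline{\Pi}^{\leftarrow}(y)=\inf\{x>0:\overline{\Pi}(x)\le y\}$. Suppose there are functions $a:(0,\infty)\to(0,\infty)$, $b:(0,\infty)\to\mathbb{R}$ and $\gamma\le0$ such that for all $y\in\mathbb{R}$, $$\lim_{r\to\infty}\frac{\overline{\Pi}^{\leftarrow}(r-y\sqrt r)-b(r)}{a(r)}=h^{\leftarrow}(y),$$ where $h^{\leftarrow}(y)=(1-e^{-\gamma y/2})/\gamma$ if $\gamma\ne0$ and $h^{\leftarrow}(y)=y/2$ if $\gamma=0$. Let $H^{\leftarrow}(x)=\tfrac14\log^2x$ for $x>1$ and $V(x)=\overline{\Pi}^{\leftarrow}(H^{\leftarrow}(x))$, $x>1$. Then: (i) if $\gamma<0$, $V(x)\sim a(H^{\leftarrow}(x))/|\gamma|$ as $x\to\infty$, and this function is regularly varying at $\infty$ with index $-|\gamma|/2$; (ii) if $\gamma=0$, $-V$ belongs to de Haan's class $\Pi$ with slowly varying auxiliary function $\tfrac12 a(H^{\leftarrow}(\cdot))$, i.e. $\lim_{s\to\infty}\frac{-V(sx)+V(s)}{\frac12a(H^{\leftarrow}(s))}=\log x$ for all $x>0$.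
   Context: $H^{\leftarrow}$ is the inverse of $H(t)=e^{2\sqrt t}$. A measurable function $U$ is in de Haan's class $\Pi$ with auxiliary function $g>0$ if $(U(sx)-U(s))/g(s)\to\log x$ as $s\to\infty$ for all $x>0$. *)

theory Defs
  imports "HOL-Probability.Probability" "HOL-Library.Landau_Symbols"
begin

definition levy_measure_pos :: "real measure \<Rightarrow> bool" where
  "levy_measure_pos P \<longleftrightarrow> sets P = sets borel \<and> emeasure P {..0} = 0 \<and>
     (\<integral>\<^sup>+ x. ennreal (min 1 (x\<^sup>2)) \<partial>P) < \<infinity>"

definition infinite_measure_pos :: "real measure \<Rightarrow> bool" where
  "infinite_measure_pos P \<longleftrightarrow> emeasure P {0<..} = \<infinity>"

definition atomless :: "real measure \<Rightarrow> bool" where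
  "atomless P \<longleftrightarrow> (\<forall>x. emeasure P {x} = 0)"

definition tail :: "real measure \<Rightarrow> real \<Rightarrow> real" where
  "tail P x = measure P {x<..}"

definition tail_inv :: "real measure \<Rightarrow> real \<Rightarrow> real" where
  "tail_inv P y = Inf {x. x > 0 \<and> tail P x \<le> y}"

definition h_inv :: "real \<Rightarrow> real \<Rightarrow> real" where
  "h_inv \<gamma> y = (if \<gamma> \<noteq> 0 then (1 - exp (- \<gamma> * y / 2)) / \<gamma> else y / 2)"

definition H_inv :: "real \<Rightarrow> real" where
  "H_inv x = (ln x)\<^sup>2 / 4"

definition regularly_varying :: "(real \<Rightarrow> real) \<Rightarrow> real \<Rightarrow> bool" where
  "regularly_varying f \<rho> \<longleftrightarrow> eventually (\<lambda>x. f x > 0) at_top \<and>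
     (\<forall>l>0. ((\<lambda>x. f (l * x) / f x) \<longlongrightarrow> l powr \<rho>) at_top)"

definition slowly_varying :: "(real \<Rightarrow> real) \<Rightarrow> bool" where
  "slowly_varying f \<longleftrightarrow> regularly_varying f 0"

definition deHaan_Pi :: "(real \<Rightarrow> real) \<Rightarrow> (real \<Rightarrow> real) \<Rightarrow> bool" where
  "deHaan_Pi U g \<longleftrightarrow> eventually (\<lambda>s. g s > 0) at_top \<and>
     (\<forall>x>0. ((\<lambda>s. (U (s * x) - U s) / g s) \<longlongrightarrow> ln x) at_top)"

end

(*
  Write T for the inverse tail and r = H_inv x. Since H_inv (l x) = r + ln l sqrt r + (ln l)^2/4,
  multiplying x by l corresponds to y = -ln l in the hypothesis
  T (r - y sqrt r) = b r + a r h(y) + o(a r); the extra constant (ln l)^2/4 is absorbed by the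
  monotonicity of T and the continuity of h. Measuring one increment of T once on the scale a r
  and once on the scale a (r - y sqrt r) gives a (r - y sqrt r) / a r -> exp (-g y / 2), the
  regular variation of a o H_inv with index g/2; for g = 0 the increments of T o H_inv themselves
  give de Haan's class Pi.
  For g < 0 the centring c = b + a/g has increments o(a) along r |-> r + sqrt r, while a decreases
  geometrically along the orbits of that map; telescoping along an orbit, where T and a tend to 0,
  shows c = o(a), which is T ~ a/|g|.
*)
theory Submission
  imports Defs "HOL-Real_Asymp.Real_Asymp"
begin

lemma h_inv_zero [simp]: "h_inv g 0 = 0"
  by (simp add: h_inv_def)

lemma h_inv_one_nonzero: "h_inv g 1 \<noteq> 0"
  by (simp add: h_inv_def)

lemma h_inv_add: "h_inv g (y + z) = h_inv g y + exp (- g * y / 2) * h_inv g z"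
proof (cases "g = 0")
  case False
  have "exp (- g * (y + z) / 2) = exp (- g * y / 2) * exp (- g * z / 2)"
    by (simp add: exp_add [symmetric] field_simps)
  with False show ?thesis by (simp add: h_inv_def field_simps)
qed (simp add: h_inv_def)

lemma isCont_h_inv: "isCont (h_inv g) y"
  by (cases "g = 0")
    (simp_all add: h_inv_def [abs_def] continuous_mult continuous_diff continuous_divide)

lemma orbit_tendsto_at_top:
  fixes \<sigma> :: "real \<Rightarrow> real"
  assumes step: "\<And>x. x \<ge> R \<Longrightarrow> x + 1 \<le> \<sigma> x" and r: "r \<ge> R"
  shows "r + real n \<le> (\<sigma> ^^ n) r"
    and "filterlim (\<lambda>n. (\<sigma> ^^ n) r) at_top sequentially"
proof -
  show ge: "r + real n \<le> (\<sigma> ^^ n) r" for n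
  proof (induction n)
    case (Suc n)
    then show ?case using step[of "(\<sigma> ^^ n) r"] r by simp
  qed simp
  show "filterlim (\<lambda>n. (\<sigma> ^^ n) r) at_top sequentially"
  proof (rule filterlim_at_top_mono)
    show "filterlim (\<lambda>n. r + real n) at_top sequentially" by real_asymp
  qed (use ge in simp)
qed

lemma orbit_geometric_decay:
  fixes \<sigma> a c :: "real \<Rightarrow> real"
  assumes q: "q < 1"
    and step: "\<And>x. x \<ge> R \<Longrightarrow>
      x + 1 \<le> \<sigma> x \<and> 0 < a x \<and> a (\<sigma> x) \<le> q * a x \<and> \<bar>c (\<sigma> x) - c x\<bar> \<le> e * a x"
    and r: "r \<ge> R"
  shows "(\<lambda>n. a ((\<sigma> ^^ n) r)) \<longlonglongrightarrow> 0"
    and "\<bar>c ((\<sigma> ^^ n) r) - c r\<bar> \<le> e / (1 - q) * a r"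
proof -
  define u where "u n = (\<sigma> ^^ n) r" for n
  have "\<And>x. x \<ge> R \<Longrightarrow> x + 1 \<le> \<sigma> x" using step by blast
  from orbit_tendsto_at_top(1)[OF this r] r
  have u_step: "u (Suc n) = \<sigma> (u n)" "u n \<ge> R" for n
    unfolding u_def by (simp, smt (verit) of_nat_0_le_iff)
  have ar: "0 < a r" and a\<sigma>r: "0 < a (\<sigma> r)"
    using step[of r] step[of "\<sigma> r"] r by auto
  have q0: "0 < q"
    using step[OF r] ar a\<sigma>r by (metis order.strict_trans2 zero_less_mult_pos2)
  have e0: "0 \<le> e"
    using step[OF r] ar by (metis abs_ge_zero order_trans zero_le_mult_iff not_le)
  have a_u: "a (u n) \<le> q ^ n * a r" for n
  proof (induction n)
    case (Suc n)
    have "a (u (Suc n)) \<le> q * a (u n)" using step[OF u_step(2)] by (simp add: u_step(1))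
    also have "\<dots> \<le> q * (q ^ n * a r)" using Suc q0 by (simp add: mult_left_mono)
    finally show ?case by simp
  qed (simp add: u_def)
  have c_u: "\<bar>c (u n) - c r\<bar> \<le> e * a r * (1 - q ^ n) / (1 - q)" for n
  proof (induction n)
    case (Suc n)
    have "\<bar>c (u (Suc n)) - c r\<bar> \<le> \<bar>c (u (Suc n)) - c (u n)\<bar> + \<bar>c (u n) - c r\<bar>" by simp
    also have "\<bar>c (u (Suc n)) - c (u n)\<bar> \<le> e * (q ^ n * a r)"
      using step[OF u_step(2)] a_u[of n] e0 by (simp add: u_step(1)) (meson mult_left_mono order_trans)
    also have "e * (q ^ n * a r) + \<bar>c (u n) - c r\<bar> \<le> e * a r * (1 - q ^ Suc n) / (1 - q)"
      using Suc q by (simp add: field_simps)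
    finally show ?case by simp
  qed (simp add: u_def)
  show "(\<lambda>n. a ((\<sigma> ^^ n) r)) \<longlonglongrightarrow> 0"
  proof (rule tendsto_sandwich [where f = "\<lambda>n. 0" and h = "\<lambda>n. q ^ n * a r"])
    show "(\<lambda>n. q ^ n * a r) \<longlonglongrightarrow> 0"
      using q q0 by (intro tendsto_mult_left_zero LIMSEQ_power_zero) simp
  qed (use a_u step u_step(2) in \<open>auto simp: u_def less_imp_le\<close>)
  have "e * a r * (1 - q ^ n) / (1 - q) \<le> e / (1 - q) * a r"
    using q q0 e0 ar by (simp add: field_simps mult_left_mono)
  then show "\<bar>c ((\<sigma> ^^ n) r) - c r\<bar> \<le> e / (1 - q) * a r"
    using c_u[of n] by (simp add: u_def)
qed

text \<open>Letting \<open>n \<rightarrow> \<infinity>\<close> in the telescoped bound: along the orbit \<open>c\<close> tends to the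
  limit of \<open>t\<close>, namely 0, because \<open>a\<close> does.\<close>
lemma abs_le_by_orbit_increments:
  fixes \<sigma> a c t :: "real \<Rightarrow> real"
  assumes q: "q < 1"
    and step: "\<And>x. x \<ge> R \<Longrightarrow>
      x + 1 \<le> \<sigma> x \<and> 0 < a x \<and> a (\<sigma> x) \<le> q * a x \<and> \<bar>c (\<sigma> x) - c x\<bar> \<le> e * a x"
    and t: "(t \<longlongrightarrow> 0) at_top"
    and close: "\<And>x. x \<ge> R \<Longrightarrow> \<bar>c x - t x\<bar> \<le> K * a x"
    and r: "r \<ge> R"
  shows "\<bar>c r\<bar> \<le> e / (1 - q) * a r"
proof -
  define u where "u n = (\<sigma> ^^ n) r" for n
  have "\<And>x. x \<ge> R \<Longrightarrow> x + 1 \<le> \<sigma> x" using step by blast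
  note orbit = orbit_tendsto_at_top[OF this r]
  have u_top: "filterlim u at_top sequentially" and u_R: "u n \<ge> R" for n
    using orbit(2) orbit(1)[of n] r unfolding u_def by (simp, smt (verit) of_nat_0_le_iff)
  have "(\<lambda>n. c (u n) - t (u n)) \<longlonglongrightarrow> 0"
  proof (rule Lim_null_comparison)
    show "(\<lambda>n. K * a (u n)) \<longlonglongrightarrow> 0"
      using orbit_geometric_decay(1)[OF q step r] unfolding u_def by (rule tendsto_mult_right_zero)
  qed (use close u_R in auto)
  moreover have "(\<lambda>n. t (u n)) \<longlonglongrightarrow> 0"
    using filterlim_compose[OF t u_top] .
  ultimately have "(\<lambda>n. c (u n) - t (u n) + t (u n)) \<longlonglongrightarrow> 0 + 0"
    by (rule tendsto_add)
  then have "(\<lambda>n. \<bar>c (u n) - c r\<bar>) \<longlonglongrightarrow> \<bar>c r\<bar>"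
    using tendsto_rabs[OF tendsto_diff[OF _ tendsto_const[of "c r"]]] by fastforce
  then show ?thesis
    by (rule tendsto_upperbound)
      (use orbit_geometric_decay(2)[OF q step r] in \<open>simp_all add: u_def\<close>)
qed

lemma ratio_tendsto_0_by_increments:
  fixes \<sigma> a c t :: "real \<Rightarrow> real"
  assumes \<sigma>: "\<forall>\<^sub>F x in at_top. x + 1 \<le> \<sigma> x"
    and a_pos: "\<forall>\<^sub>F x in at_top. 0 < a x"
    and a_ratio: "((\<lambda>x. a (\<sigma> x) / a x) \<longlongrightarrow> q) at_top" and q: "q < 1"
    and increments: "((\<lambda>x. (c (\<sigma> x) - c x) / a x) \<longlongrightarrow> 0) at_top"
    and t: "(t \<longlongrightarrow> 0) at_top"
    and close: "\<forall>\<^sub>F x in at_top. \<bar>c x - t x\<bar> \<le> K * a x"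
  shows "((\<lambda>x. c x / a x) \<longlongrightarrow> 0) at_top"
proof (rule tendstoI)
  fix \<epsilon> :: real assume "\<epsilon> > 0"
  define q' where "q' = (1 + q) / 2"
  define \<epsilon>' where "\<epsilon>' = \<epsilon> * (1 - q') / 2"
  have "q < q'" "q' < 1" "\<epsilon>' > 0" using q \<open>\<epsilon> > 0\<close> by (simp_all add: q'_def \<epsilon>'_def)
  have "\<forall>\<^sub>F x in at_top. (x + 1 \<le> \<sigma> x \<and> 0 < a x \<and> a (\<sigma> x) \<le> q' * a x \<and>
      \<bar>c (\<sigma> x) - c x\<bar> \<le> \<epsilon>' * a x) \<and> \<bar>c x - t x\<bar> \<le> K * a x"
    using \<sigma> a_pos order_tendstoD(2)[OF a_ratio \<open>q < q'\<close>]
      tendstoD[OF increments \<open>\<epsilon>' > 0\<close>] close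
    by eventually_elim (auto simp: dist_real_def field_simps)
  then obtain R where R: "\<And>x. x \<ge> R \<Longrightarrow> (x + 1 \<le> \<sigma> x \<and> 0 < a x \<and> a (\<sigma> x) \<le> q' * a x \<and>
      \<bar>c (\<sigma> x) - c x\<bar> \<le> \<epsilon>' * a x) \<and> \<bar>c x - t x\<bar> \<le> K * a x"
    by (auto simp: eventually_at_top_linorder)
  have \<epsilon>': "\<epsilon>' / (1 - q') = \<epsilon> / 2" using \<open>q' < 1\<close> by (simp add: \<epsilon>'_def field_simps)
  have bound: "\<bar>c x\<bar> \<le> \<epsilon> / 2 * a x" if "x \<ge> R" for x
    using abs_le_by_orbit_increments[OF \<open>q' < 1\<close> conjunct1[OF R] t conjunct2[OF R] that]
    unfolding \<epsilon>' .
  show "\<forall>\<^sub>F x in at_top. dist (c x / a x) 0 < \<epsilon>"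
    using eventually_ge_at_top[of R]
  proof eventually_elim
    case (elim x)
    with R \<open>\<epsilon> > 0\<close> have "0 < a x" "0 < \<epsilon> * a x" by auto
    with bound[OF elim] show ?case by (simp add: field_simps)
  qed
qed

lemma eventually_between_sqrt_shifts:
  assumes "((\<lambda>r. (\<rho> r - r) / sqrt r) \<longlongrightarrow> - y) at_top" and "d > 0"
  shows "\<forall>\<^sub>F r in at_top. r - (y + d) * sqrt r \<le> \<rho> r \<and> \<rho> r \<le> r - (y - d) * sqrt r"
  using tendstoD[OF assms] eventually_gt_at_top[of 0]
proof eventually_elim
  case (elim r)
  then have "- y - d < (\<rho> r - r) / sqrt r" "(\<rho> r - r) / sqrt r < - y + d"
    by (auto simp: dist_real_def abs_less_iff)
  then have "(- y - d) * sqrt r < \<rho> r - r" "\<rho> r - r < (- y + d) * sqrt r"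
    using \<open>r > 0\<close> by (simp_all add: field_simps)
  then show ?case by (simp add: algebra_simps)
qed

lemma sqrt_ratio_tendsto_1:
  assumes "((\<lambda>r. (\<sigma> r - r) / sqrt r) \<longlongrightarrow> c) at_top"
  shows "((\<lambda>r. sqrt (\<sigma> r) / sqrt r) \<longlongrightarrow> 1) at_top"
proof -
  have "((\<lambda>r. 1 + (\<sigma> r - r) / sqrt r * (1 / sqrt r)) \<longlongrightarrow> 1 + c * 0) at_top"
    by (intro tendsto_intros assms) real_asymp
  then have "((\<lambda>r. 1 + (\<sigma> r - r) / sqrt r * (1 / sqrt r)) \<longlongrightarrow> 1) at_top"
    by simp
  then have "((\<lambda>r. \<sigma> r / r) \<longlongrightarrow> 1) at_top"
    by (rule Lim_transform_eventually)
      (use eventually_gt_at_top[of 0] in \<open>eventually_elim, simp add: field_simps\<close>)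
  then show ?thesis
    using tendsto_real_sqrt by (fastforce simp: real_sqrt_divide)
qed

lemma filterlim_H_inv_at_top: "filterlim H_inv at_top at_top"
  unfolding H_inv_def by real_asymp

lemma H_inv_mult:
  assumes "x \<ge> 1" "l > 0"
  shows "H_inv (l * x) = H_inv x + ln l * sqrt (H_inv x) + (ln l)\<^sup>2 / 4"
proof -
  have "sqrt (H_inv x) = ln x / 2"
    using assms by (simp add: H_inv_def real_sqrt_divide)
  then show ?thesis
    using assms by (simp add: H_inv_def ln_mult power2_eq_square field_simps)
qed

lemma tendsto_H_inv_mult:
  assumes "((\<lambda>r. f r (r + ln l * sqrt r + (ln l)\<^sup>2 / 4)) \<longlongrightarrow> L) at_top" and "l > 0"
  shows "((\<lambda>x. f (H_inv x) (H_inv (l * x))) \<longlongrightarrow> L) at_top"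
  using filterlim_compose[OF assms(1) filterlim_H_inv_at_top]
proof (rule Lim_transform_eventually)
  show "\<forall>\<^sub>F x in at_top. f (H_inv x) (H_inv x + ln l * sqrt (H_inv x) + (ln l)\<^sup>2 / 4)
      = f (H_inv x) (H_inv (l * x))"
    using eventually_ge_at_top[of 1] by eventually_elim (simp add: H_inv_mult \<open>l > 0\<close>)
qed

locale sqrt_rescaled_limit =
  fixes T a b :: "real \<Rightarrow> real" and g Y :: real
  assumes antimono: "\<And>u v. Y \<le> u \<Longrightarrow> u \<le> v \<Longrightarrow> T v \<le> T u"
    and a_pos: "\<And>r. r > 0 \<Longrightarrow> a r > 0"
    and limit: "\<And>y. ((\<lambda>r. (T (r - y * sqrt r) - b r) / a r) \<longlongrightarrow> h_inv g y) at_top"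
begin

lemma eventually_a_pos: "\<forall>\<^sub>F r in at_top. a r > 0"
  using eventually_gt_at_top[of 0] by eventually_elim (rule a_pos)

lemma centred_limit: "((\<lambda>r. (T r - b r) / a r) \<longlongrightarrow> 0) at_top"
  using limit[of 0] by simp

lemma limit_along:
  assumes \<rho>: "((\<lambda>r. (\<rho> r - r) / sqrt r) \<longlongrightarrow> - y) at_top"
  shows "((\<lambda>r. (T (\<rho> r) - b r) / a r) \<longlongrightarrow> h_inv g y) at_top"
proof (rule tendstoI)
  fix \<epsilon> :: real assume "\<epsilon> > 0"
  have "\<exists>d>0. \<forall>z. \<bar>z - y\<bar> < d \<longrightarrow> \<bar>h_inv g z - h_inv g y\<bar> < \<epsilon> / 2"
    using isCont_h_inv[where g = g and y = y] half_gt_zero[OF \<open>\<epsilon> > 0\<close>]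
    unfolding continuous_at_eps_delta dist_real_def by blast
  then obtain d0 where "d0 > 0"
    and h_close: "\<And>z. \<bar>z - y\<bar> < d0 \<Longrightarrow> \<bar>h_inv g z - h_inv g y\<bar> < \<epsilon> / 2"
    by blast
  define d where "d = d0 / 2"
  have "d > 0" "d < d0" using \<open>d0 > 0\<close> by (simp_all add: d_def)
  have "\<forall>\<^sub>F r in at_top. r - (y + d) * sqrt r \<le> \<rho> r \<and> \<rho> r \<le> r - (y - d) * sqrt r"
    using \<rho> \<open>d > 0\<close> by (rule eventually_between_sqrt_shifts)
  moreover have "\<forall>\<^sub>F r in at_top. Y \<le> r - (y + d) * sqrt r"
  proof -
    have "filterlim (\<lambda>r. r - (y + d) * sqrt r) at_top at_top" by real_asymp
    then show ?thesis by (simp add: filterlim_at_top)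
  qed
  moreover note tendstoD[OF limit[of "y - d"] half_gt_zero[OF \<open>\<epsilon> > 0\<close>]]
    tendstoD[OF limit[of "y + d"] half_gt_zero[OF \<open>\<epsilon> > 0\<close>]] eventually_a_pos
  ultimately show "\<forall>\<^sub>F r in at_top. dist ((T (\<rho> r) - b r) / a r) (h_inv g y) < \<epsilon>"
  proof eventually_elim
    case (elim r)
    then have "T (r - (y - d) * sqrt r) \<le> T (\<rho> r)" "T (\<rho> r) \<le> T (r - (y + d) * sqrt r)"
      using antimono[of "\<rho> r"] antimono[of "r - (y + d) * sqrt r"] by auto
    with \<open>a r > 0\<close> have "(T (r - (y - d) * sqrt r) - b r) / a r \<le> (T (\<rho> r) - b r) / a r"
      "(T (\<rho> r) - b r) / a r \<le> (T (r - (y + d) * sqrt r) - b r) / a r"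
      by (simp_all add: divide_right_mono)
    moreover have "\<bar>h_inv g (y - d) - h_inv g y\<bar> < \<epsilon> / 2" "\<bar>h_inv g (y + d) - h_inv g y\<bar> < \<epsilon> / 2"
      using h_close \<open>d > 0\<close> \<open>d < d0\<close> by simp_all
    ultimately show ?case using elim
      unfolding dist_real_def abs_less_iff by linarith
  qed
qed

lemma limit_along_rescaled:
  assumes \<sigma>: "((\<lambda>r. (\<sigma> r - r) / sqrt r) \<longlongrightarrow> - y) at_top"
  shows "((\<lambda>r. (T (\<sigma> r - z * sqrt (\<sigma> r)) - b r) / a r) \<longlongrightarrow> h_inv g (y + z)) at_top"
proof (rule limit_along)
  have "((\<lambda>r. (\<sigma> r - r) / sqrt r - z * (sqrt (\<sigma> r) / sqrt r)) \<longlongrightarrow> - y - z * 1) at_top"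
    by (intro tendsto_intros \<sigma> sqrt_ratio_tendsto_1[OF \<sigma>])
  then show "((\<lambda>r. (\<sigma> r - z * sqrt (\<sigma> r) - r) / sqrt r) \<longlongrightarrow> - (y + z)) at_top"
    by (simp add: diff_divide_distrib add_divide_distrib algebra_simps)
qed

lemma a_ratio_along:
  assumes \<sigma>_top: "filterlim \<sigma> at_top at_top"
    and \<sigma>: "((\<lambda>r. (\<sigma> r - r) / sqrt r) \<longlongrightarrow> - y) at_top"
  shows "((\<lambda>r. a (\<sigma> r) / a r) \<longlongrightarrow> exp (- g * y / 2)) at_top"
proof -
  define N where "N r = T (\<sigma> r - 1 * sqrt (\<sigma> r)) - T (\<sigma> r - 0 * sqrt (\<sigma> r))" for r
  \<comment> \<open>the same increment of \<open>T\<close>, measured on the scales \<open>a r\<close> and \<open>a (\<sigma> r)\<close>\<close>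
  have "((\<lambda>r. N r / a r) \<longlongrightarrow> h_inv g (y + 1) - h_inv g (y + 0)) at_top"
    using tendsto_diff[OF limit_along_rescaled[OF \<sigma>, of 1] limit_along_rescaled[OF \<sigma>, of 0]]
    by (simp add: N_def diff_divide_distrib)
  then have N_a: "((\<lambda>r. N r / a r) \<longlongrightarrow> exp (- g * y / 2) * h_inv g 1) at_top"
    by (simp add: h_inv_add)
  have N_a\<sigma>: "((\<lambda>r. N r / a (\<sigma> r)) \<longlongrightarrow> h_inv g 1 - h_inv g 0) at_top"
    using tendsto_diff[OF filterlim_compose[OF limit[of 1] \<sigma>_top]
        filterlim_compose[OF limit[of 0] \<sigma>_top]]
    by (simp add: N_def diff_divide_distrib)
  then have N_a\<sigma>': "((\<lambda>r. N r / a (\<sigma> r)) \<longlongrightarrow> h_inv g 1) at_top"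
    by simp
  have "((\<lambda>r. (N r / a r) / (N r / a (\<sigma> r))) \<longlongrightarrow>
      exp (- g * y / 2) * h_inv g 1 / h_inv g 1) at_top"
    by (intro tendsto_divide N_a N_a\<sigma>' h_inv_one_nonzero)
  moreover have "\<forall>\<^sub>F r in at_top. (N r / a r) / (N r / a (\<sigma> r)) = a (\<sigma> r) / a r"
    using eventually_a_pos eventually_compose_filterlim[OF eventually_a_pos \<sigma>_top]
      tendsto_imp_eventually_ne[OF N_a\<sigma>' h_inv_one_nonzero]
    by eventually_elim simp
  ultimately show ?thesis
    using h_inv_one_nonzero by (simp add: tendsto_cong)
qed

lemma b_increment_along:
  assumes \<sigma>_top: "filterlim \<sigma> at_top at_top"
    and \<sigma>: "((\<lambda>r. (\<sigma> r - r) / sqrt r) \<longlongrightarrow> - y) at_top"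
  shows "((\<lambda>r. (b (\<sigma> r) - b r) / a r) \<longlongrightarrow> h_inv g y) at_top"
proof -
  have "((\<lambda>r. (T (\<sigma> r - 0 * sqrt (\<sigma> r)) - b r) / a r
      - (T (\<sigma> r - 0 * sqrt (\<sigma> r)) - b (\<sigma> r)) / a (\<sigma> r) * (a (\<sigma> r) / a r))
      \<longlongrightarrow> h_inv g (y + 0) - h_inv g 0 * exp (- g * y / 2)) at_top"
    by (intro tendsto_intros limit_along_rescaled[OF \<sigma>] filterlim_compose[OF limit \<sigma>_top]
        a_ratio_along[OF assms])
  moreover have "\<forall>\<^sub>F r in at_top. (T (\<sigma> r - 0 * sqrt (\<sigma> r)) - b r) / a r
      - (T (\<sigma> r - 0 * sqrt (\<sigma> r)) - b (\<sigma> r)) / a (\<sigma> r) * (a (\<sigma> r) / a r)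
      = (b (\<sigma> r) - b r) / a r"
    using eventually_a_pos eventually_compose_filterlim[OF eventually_a_pos \<sigma>_top]
    by eventually_elim (simp add: field_simps)
  ultimately show ?thesis by (simp add: tendsto_cong)
qed

lemma asymp_equiv_T_a:
  assumes g: "g < 0" and T: "(T \<longlongrightarrow> 0) at_top"
  shows "T \<sim>[at_top] (\<lambda>r. a r / \<bar>g\<bar>)"
proof (rule asymp_equivI')
  define \<sigma> where "\<sigma> r = r + sqrt r" for r :: real
  \<comment> \<open>\<open>b r + a r * h_inv g y = c r - a r * exp (- g * y / 2) / g\<close>\<close>
  define c where "c r = b r + a r / g" for r
  have \<sigma>_top: "filterlim \<sigma> at_top at_top" unfolding \<sigma>_def by real_asymp
  have \<sigma>: "((\<lambda>r. (\<sigma> r - r) / sqrt r) \<longlongrightarrow> - (- 1)) at_top" unfolding \<sigma>_def by real_asymp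
  have a_ratio: "((\<lambda>r. a (\<sigma> r) / a r) \<longlongrightarrow> exp (g / 2)) at_top"
    using a_ratio_along[OF \<sigma>_top \<sigma>] by simp
  have b_increments: "((\<lambda>r. (b (\<sigma> r) - b r) / a r) \<longlongrightarrow> (1 - exp (g / 2)) / g) at_top"
    using b_increment_along[OF \<sigma>_top \<sigma>] g by (simp add: h_inv_def)
  have "((\<lambda>r. (b (\<sigma> r) - b r) / a r + (a (\<sigma> r) / a r - 1) / g) \<longlongrightarrow>
      (1 - exp (g / 2)) / g + (exp (g / 2) - 1) / g) at_top"
    using g by (intro tendsto_add[OF b_increments] tendsto_divide tendsto_diff a_ratio) auto
  moreover have "\<forall>\<^sub>F r in at_top.
      (b (\<sigma> r) - b r) / a r + (a (\<sigma> r) / a r - 1) / g = (c (\<sigma> r) - c r) / a r"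
    using eventually_a_pos by eventually_elim (use g in \<open>simp add: c_def field_simps\<close>)
  ultimately have c_increments: "((\<lambda>r. (c (\<sigma> r) - c r) / a r) \<longlongrightarrow> 0) at_top"
    by (simp add: tendsto_cong diff_divide_distrib)
  have "\<forall>\<^sub>F r in at_top. \<bar>c r - T r\<bar> \<le> (1 / \<bar>g\<bar> + 1) * a r"
    using eventually_a_pos tendstoD[OF centred_limit zero_less_one]
  proof eventually_elim
    case (elim r)
    then have "\<bar>T r - b r\<bar> \<le> a r" by (simp add: dist_real_def field_simps)
    then have "\<bar>c r - T r\<bar> \<le> a r / \<bar>g\<bar> + a r"
      using abs_triangle_ineq4[of "a r / g" "T r - b r"] \<open>a r > 0\<close>
      by (simp add: c_def)
    then show ?case by (simp add: distrib_right)
  qed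
  moreover have "\<forall>\<^sub>F r in at_top. r + 1 \<le> \<sigma> r"
    using eventually_ge_at_top[of 1] by eventually_elim (simp add: \<sigma>_def)
  ultimately have "((\<lambda>r. c r / a r) \<longlongrightarrow> 0) at_top"
    using g by (intro ratio_tendsto_0_by_increments[OF _ eventually_a_pos a_ratio _ c_increments T]) auto
  then have "((\<lambda>r. - g * ((T r - b r) / a r + c r / a r)) \<longlongrightarrow> - g * (0 + 0)) at_top"
    by (intro tendsto_intros centred_limit)
  moreover have "\<forall>\<^sub>F r in at_top. - g * ((T r - b r) / a r + c r / a r) + 1 = T r / (a r / \<bar>g\<bar>)"
    using eventually_a_pos by eventually_elim (use g in \<open>simp add: c_def field_simps\<close>)
  ultimately show "((\<lambda>r. T r / (a r / \<bar>g\<bar>)) \<longlongrightarrow> 1) at_top"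
    using tendsto_add[OF _ tendsto_const[of 1]] by (fastforce simp: tendsto_cong)
qed

lemma eventually_a_H_inv_pos: "\<forall>\<^sub>F x in at_top. a (H_inv x) > 0"
  using eventually_compose_filterlim[OF eventually_a_pos filterlim_H_inv_at_top] .

lemma regularly_varying_a_H_inv:
  assumes "c > 0"
  shows "regularly_varying (\<lambda>x. a (H_inv x) / c) (g / 2)"
  unfolding regularly_varying_def
proof (intro conjI allI impI)
  show "\<forall>\<^sub>F x in at_top. a (H_inv x) / c > 0"
    using eventually_a_H_inv_pos by eventually_elim (use assms in simp)
  fix l :: real assume "l > 0"
  have "((\<lambda>r. a (r + ln l * sqrt r + (ln l)\<^sup>2 / 4) / a r) \<longlongrightarrow> exp (- g * - ln l / 2)) at_top"
    by (rule a_ratio_along) real_asymp+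
  from tendsto_H_inv_mult[where f = "\<lambda>r s. a s / a r", OF this \<open>l > 0\<close>]
  show "((\<lambda>x. a (H_inv (l * x)) / c / (a (H_inv x) / c)) \<longlongrightarrow> l powr (g / 2)) at_top"
    using assms \<open>l > 0\<close> by (simp add: powr_def mult_ac)
qed

lemma deHaan_Pi_T_H_inv:
  assumes "g = 0"
  shows "deHaan_Pi (\<lambda>x. - T (H_inv x)) (\<lambda>x. a (H_inv x) / 2)"
  unfolding deHaan_Pi_def
proof (intro conjI allI impI)
  show "\<forall>\<^sub>F x in at_top. a (H_inv x) / 2 > 0"
    using eventually_a_H_inv_pos by eventually_elim simp
  fix t :: real assume "t > 0"
  have "((\<lambda>r. (T (r + ln t * sqrt r + (ln t)\<^sup>2 / 4) - b r) / a r) \<longlongrightarrow> h_inv g (- ln t)) at_top"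
    by (rule limit_along) real_asymp
  from tendsto_mult[OF tendsto_const[of "-2"] tendsto_diff[OF this centred_limit]]
  have "((\<lambda>r. -2 * ((T (r + ln t * sqrt r + (ln t)\<^sup>2 / 4) - b r) / a r - (T r - b r) / a r))
      \<longlongrightarrow> ln t) at_top"
    using assms by (simp add: h_inv_def)
  moreover have "\<forall>\<^sub>F r in at_top.
      -2 * ((T (r + ln t * sqrt r + (ln t)\<^sup>2 / 4) - b r) / a r - (T r - b r) / a r)
      = (- T (r + ln t * sqrt r + (ln t)\<^sup>2 / 4) - - T r) / (a r / 2)"
    using eventually_a_pos by eventually_elim (simp add: field_simps)
  ultimately have "((\<lambda>r. (- T (r + ln t * sqrt r + (ln t)\<^sup>2 / 4) - - T r) / (a r / 2)) \<longlongrightarrow> ln t) at_top"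
    by (simp add: tendsto_cong)
  from tendsto_H_inv_mult[where f = "\<lambda>r s. (- T s - - T r) / (a r / 2)", OF this \<open>t > 0\<close>]
  show "((\<lambda>s. (- T (H_inv (s * t)) - - T (H_inv s)) / (a (H_inv s) / 2)) \<longlongrightarrow> ln t) at_top"
    by (simp add: mult.commute)
qed

end

text \<open>Below \<open>max 1 (tail P 1)\<close> the set defining \<open>tail_inv P\<close> may be empty.\<close>
lemma tail_inv_antimono:
  assumes "max 1 (tail P 1) \<le> u" "u \<le> v"
  shows "tail_inv P v \<le> tail_inv P u"
  unfolding tail_inv_def
proof (rule cInf_superset_mono)
  show "{x. 0 < x \<and> tail P x \<le> u} \<noteq> {}" using assms by (intro exI[of _ 1] notI) auto
  show "bdd_below {x. 0 < x \<and> tail P x \<le> v}" by (rule bdd_belowI[of _ 0]) auto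
  show "{x. 0 < x \<and> tail P x \<le> u} \<subseteq> {x. 0 < x \<and> tail P x \<le> v}" using assms by auto
qed

lemma tail_inv_tendsto_0: "(tail_inv P \<longlongrightarrow> 0) at_top"
proof (rule tendstoI)
  fix \<epsilon> :: real assume "\<epsilon> > 0"
  show "\<forall>\<^sub>F y in at_top. dist (tail_inv P y) 0 < \<epsilon>"
    using eventually_ge_at_top[of "max (max 1 (tail P 1)) (tail P (\<epsilon> / 2))"]
  proof eventually_elim
    case (elim y)
    have "{x. 0 < x \<and> tail P x \<le> y} \<noteq> {}" using elim by (intro exI[of _ 1] notI) auto
    then have "tail_inv P y \<ge> 0" unfolding tail_inv_def by (rule cInf_greatest) auto
    moreover have "tail_inv P y \<le> \<epsilon> / 2"
      unfolding tail_inv_def using \<open>\<epsilon> > 0\<close> elim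
      by (intro cInf_lower bdd_belowI[of _ 0]) auto
    ultimately show ?case using \<open>\<epsilon> > 0\<close> by simp
  qed
qed

theorem proposition3p1:
  fixes P :: "real measure" and a b :: "real \<Rightarrow> real" and \<gamma> :: real
  assumes "levy_measure_pos P" and "infinite_measure_pos P" and "atomless P"
    and "\<forall>r>0. a r > 0" and "\<gamma> \<le> 0"
    and "\<forall>y::real. ((\<lambda>r. (tail_inv P (r - y * sqrt r) - b r) / a r) \<longlongrightarrow> h_inv \<gamma> y) at_top"
  shows "(\<gamma> < 0 \<longrightarrow>
           (\<lambda>x. tail_inv P (H_inv x)) \<sim>[at_top] (\<lambda>x. a (H_inv x) / \<bar>\<gamma>\<bar>) \<and>
           regularly_varying (\<lambda>x. a (H_inv x) / \<bar>\<gamma>\<bar>) (- \<bar>\<gamma>\<bar> / 2))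
       \<and> (\<gamma> = 0 \<longrightarrow>
           deHaan_Pi (\<lambda>x. - tail_inv P (H_inv x)) (\<lambda>x. a (H_inv x) / 2) \<and>
           slowly_varying (\<lambda>x. a (H_inv x) / 2))"
proof -
  \<comment> \<open>only the positivity of \<open>a\<close> and the limit hypothesis are used\<close>
  interpret sqrt_rescaled_limit "tail_inv P" a b \<gamma> "max 1 (tail P 1)"
    using assms(4,6) by unfold_locales (auto intro: tail_inv_antimono)
  show ?thesis
  proof (intro conjI impI)
    assume "\<gamma> < 0"
    show "(\<lambda>x. tail_inv P (H_inv x)) \<sim>[at_top] (\<lambda>x. a (H_inv x) / \<bar>\<gamma>\<bar>)"
      using asymp_equiv_compose'[OF asymp_equiv_T_a[OF \<open>\<gamma> < 0\<close> tail_inv_tendsto_0]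
          filterlim_H_inv_at_top] .
    show "regularly_varying (\<lambda>x. a (H_inv x) / \<bar>\<gamma>\<bar>) (- \<bar>\<gamma>\<bar> / 2)"
      using regularly_varying_a_H_inv[of "\<bar>\<gamma>\<bar>"] \<open>\<gamma> < 0\<close> by simp
  next
    assume "\<gamma> = 0"
    then show "deHaan_Pi (\<lambda>x. - tail_inv P (H_inv x)) (\<lambda>x. a (H_inv x) / 2)"
      by (rule deHaan_Pi_T_H_inv)
    show "slowly_varying (\<lambda>x. a (H_inv x) / 2)"
      using regularly_varying_a_H_inv[of 2] \<open>\<gamma> = 0\<close> by (simp add: slowly_varying_def)
  qed
qed

end
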